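(* Assume $\kappa\ge\|f'\|_{C[-\beta,\beta]}$ and $\|\phi^0\|_\infty\le\beta$. If $$\tau_1\le\Big(\frac{4}{11\varsigma m(\kappa+4\varepsilon^2/h^2)\Gamma(2-\alpha)}\Big)^{1/\alpha},$$ then the $L2$-$1_\sigma$ first-step iterates satisfy $\|\hat\phi^1_{(s)}\|_\infty\le\beta$ for all $s\ge1$. If moreover $$\tau_1\le\Big(\frac{4}{11\kappa(1-\varsigma)m\Gamma(2-\alpha)}\Big)^{1/\alpha},$$ then the iterates converge in $\|\cdot\|_\infty$ to a solution $\hat\phi^1$ of the $L2$-$1_\sigma$ nonlinear first-step equation with $\|\hat\phi^1\|_\infty\le\beta$, and this is its unique solution with $\|\hat\phi^1\|_\infty\le\beta$.
   Context: Setting: $\Omega=(0,L)^2$ with periodic boundary conditions; constants $m>0$, $\varepsilon>0$, $\alpha\in(0,1)$, and $\varsigma:=\alpha/2$. The nonlinearity $f=-F'$ is one of: (double-well) $F(\phi)=\frac14(1-\phi^2)^2$, $f(\phi)=\phi-\phi^3$, with $\beta=1$; or (Flory–Huggins) $F(\phi)=\frac{\theta}{2}[(1+\phi)\ln(1+\phi)+(1-\phi)\ln(1-\phi)]-\frac{\theta_c}{2}\phi^2$, $f(\phi)=\frac{\theta}{2}\ln\frac{1-\phi}{1+\phi}+\theta_c\phi$ on $(-1,1)$, with $\theta_c>\theta>0$ and $\beta\in(0,1)$ the positive root of $f$. In both cases $f(\pm\beta)=0$. Spatial discretization: $M\in\mathbb N$, $h=L/M$; $\mathbb V_h$ is the space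 of real grid functions $v=\{v_{ij}\}_{i,j\in\mathbb Z}$ that are $M$-periodic in each index; $\|v\|_\infty=\max_{1\le i,j\le M}|v_{ij}|$; $\Delta_hv_{ij}=h^{-2}(v_{i+1,j}+v_{i-1,j}+v_{i,j+1}+v_{i,j-1}-4v_{ij})$. Scalar functions act on grid functions pointwise. Time grid $0=t_0<t_1$, $\tau_1=t_1$; $\omega_\mu(t)=t^{\mu-1}/\Gamma(\mu)$. Constant $\kappa\ge0$; $\phi^0\in\mathbb V_h$. First step of the $L2$-$1_\sigma$ schemes: $B^{(1)}_0=\frac1{\tau_1}\int_{0}^{t_{1-\varsigma}}\omega_{1-\alpha}(t_{1-\varsigma}-s)\,ds=\frac{(1-\varsigma)^{1-\alpha}}{\Gamma(2-\alpha)\tau_1^\alpha}$ with $t_{1-\varsigma}=(1-\varsigma)t_1$. The nonlinear first-step equation for $\hat\phi^1\in\mathbb V_h$ is $B^{(1)}_0(\hat\phi^1-\phi^0)=m(\varepsilon^2\Delta_h\hat\phi^{1-\varsigma}+f(\hat\phi^{1-\varsigma}))$ with $\hat\phi^{1-\varsigma}=(1-\varsigma)\hat\phi^1+\varsigma\phi^0$. The first-step iteration is $\hat\phi^1_{(0)}=\phi^0$ and, for $s\ge1$, $B^{(1)}_0(\hat\phi^1_{(s)}-\phi^0)=m(\varepsilon^2\Delta_h\hat\phi^{1-\varsigma}_{(s)}+f(\hat\phi^{1-\varsigma}_{(s-1)})-\kappa(\hat\phi^{1-\varsigma}_{(s)}-\hat\phi^{1-\varsigma}_{(s-1)}))$,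 where $\hat\phi^{1-\varsigma}_{(\ell)}=(1-\varsigma)\hat\phi^1_{(\ell)}+\varsigma\phi^0$. *)

theory Defs
  imports "HOL-Analysis.Analysis"
begin

type_synonym grid = "int \<Rightarrow> int \<Rightarrow> real"

definition grid_periodic :: "nat \<Rightarrow> grid \<Rightarrow> bool" where
  "grid_periodic M v \<longleftrightarrow> (\<forall>i j. v (i + int M) j = v i j \<and> v i (j + int M) = v i j)"

definition gnorm_inf :: "nat \<Rightarrow> grid \<Rightarrow> real" where
  "gnorm_inf M v = Max ((\<lambda>(i, j). \<bar>v i j\<bar>) ` ({1..int M} \<times> {1..int M}))"

definition lap_h :: "real \<Rightarrow> grid \<Rightarrow> grid" where
  "lap_h h v = (\<lambda>i j. (v (i+1) j + v (i-1) j + v i (j+1) + v i (j-1) - 4 * v i j) / h^2)"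

text \<open>Double-well nonlinearity f = -F' with F(x) = (1-x^2)^2/4.\<close>
definition f_dw :: "real \<Rightarrow> real" where
  "f_dw x = x - x^3"

definition f_fh :: "real \<Rightarrow> real \<Rightarrow> real \<Rightarrow> real" where
  "f_fh \<theta> \<theta>c x = \<theta> / 2 * ln ((1 - x) / (1 + x)) + \<theta>c * x"

text \<open>First-step coefficient B_0^(1) of the L2-1_sigma scheme, sigma = alpha/2.\<close>
definition B0 :: "real \<Rightarrow> real \<Rightarrow> real" where
  "B0 \<alpha> \<tau>1 = (1 - \<alpha>/2) powr (1 - \<alpha>) / (Gamma (2 - \<alpha>) * \<tau>1 powr \<alpha>)"

definition shift_comb :: "real \<Rightarrow> grid \<Rightarrow> grid \<Rightarrow> grid" where
  "shift_comb \<alpha> u phi0 = (\<lambda>i j. (1 - \<alpha>/2) * u i j + (\<alpha>/2) * phi0 i j)"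

definition first_step_eq ::
  "(real \<Rightarrow> real) \<Rightarrow> real \<Rightarrow> real \<Rightarrow> real \<Rightarrow> real \<Rightarrow> real \<Rightarrow> grid \<Rightarrow> grid \<Rightarrow> bool" where
  "first_step_eq f m \<epsilon> \<alpha> h \<tau>1 phi0 u \<longleftrightarrow>
     (\<forall>i j. B0 \<alpha> \<tau>1 * (u i j - phi0 i j) =
        m * (\<epsilon>^2 * lap_h h (shift_comb \<alpha> u phi0) i j + f (shift_comb \<alpha> u phi0 i j)))"

definition first_step_iter ::
  "(real \<Rightarrow> real) \<Rightarrow> real \<Rightarrow> real \<Rightarrow> real \<Rightarrow> real \<Rightarrow> real \<Rightarrow> real \<Rightarrow> grid \<Rightarrow> grid \<Rightarrow> grid \<Rightarrow> bool" where
  "first_step_iter f m \<epsilon> \<alpha> \<kappa> h \<tau>1 phi0 u_old u_new \<longleftrightarrow>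
     (\<forall>i j. B0 \<alpha> \<tau>1 * (u_new i j - phi0 i j) =
        m * (\<epsilon>^2 * lap_h h (shift_comb \<alpha> u_new phi0) i j
             + f (shift_comb \<alpha> u_old phi0 i j)
             - \<kappa> * (shift_comb \<alpha> u_new phi0 i j - shift_comb \<alpha> u_old phi0 i j)))"

end

theory Submission
  imports Defs
begin

text \<open>
  Write \<open>\<sigma> = \<alpha>/2\<close>, \<open>B = B0 \<alpha> \<tau>\<close>, \<open>g x = f x + \<kappa> x\<close> and \<open>S v = (1 - \<sigma>) v + \<sigma> \<phi>\<^sup>0\<close>.
  Moving the terms in the unknown to the left, one step \<open>v \<mapsto> u\<close> of the iteration reads
  \<open>(B + m\<kappa>(1 - \<sigma>)) u - m\<epsilon>\<^sup>2(1 - \<sigma>) \<Delta>\<^sub>h u = (B - m\<kappa>\<sigma>) \<phi>\<^sup>0 + m\<epsilon>\<^sup>2\<sigma> \<Delta>\<^sub>h \<phi>\<^sup>0 + m g(S v)\<close>.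
  On periodic grids the operator on the left obeys a discrete maximum principle.
  As \<open>|f'| \<le> \<kappa>\<close> and \<open>f(\<plusminus>\<beta>) = 0\<close>, \<open>g\<close> maps \<open>[-\<beta>, \<beta>]\<close> into \<open>[-\<kappa>\<beta>, \<kappa>\<beta>]\<close>, and the
  first time-step restriction makes \<open>(B - m\<kappa>\<sigma>) \<phi>\<^sup>0 + m\<epsilon>\<^sup>2\<sigma> \<Delta>\<^sub>h \<phi>\<^sup>0\<close> a nonnegative
  combination of stencil values; so the bound \<open>\<beta>\<close> passes from \<open>v\<close> to \<open>u\<close>.
  Since \<open>g\<close> is \<open>2\<kappa>\<close>-Lipschitz on \<open>[-\<beta>, \<beta>]\<close>, the maximum principle applied to differences
  shows that the iteration contracts in the maximum norm with factor
  \<open>2m\<kappa>(1 - \<sigma>) / (B + m\<kappa>(1 - \<sigma>))\<close>, which is below 1 under the second restriction.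
  The iterates thus converge geometrically to a fixed point, that is, a solution of the
  nonlinear equation, and every solution bounded by \<open>\<beta>\<close> is a fixed point, hence this one.
\<close>

section \<open>Periodic grid functions\<close>

lemma int_periodic_shift:
  fixes g :: "int \<Rightarrow> 'a"
  assumes "\<And>x. g (x + n) = g x"
  shows "g (x + k * n) = g x"
proof (induction k rule: int_induct[where k = 0])
  case (step1 k)
  have "g (x + (k + 1) * n) = g (x + k * n + n)"
    by (simp add: algebra_simps)
  with step1 assms show ?case
    by simp
next
  case (step2 k)
  have "g (x + k * n) = g (x + (k - 1) * n + n)"
    by (simp add: algebra_simps)
  with step2 assms show ?case
    by simp
qed simp

lemma grid_periodic_shift:
  assumes "grid_periodic M w"
  shows "w (i + k * int M) (j + l * int M) = w i j"
  using int_periodic_shift[of "\<lambda>x. w x (j + l * int M)"] int_periodic_shift[of "w i"] assms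
  unfolding grid_periodic_def by simp

lemma grid_periodic_reduce:
  assumes "grid_periodic M w"
  shows "w i j = w ((i - 1) mod int M + 1) ((j - 1) mod int M + 1)"
proof -
  have i: "(i - 1) mod int M + 1 + (i - 1) div int M * int M = i"
    and j: "(j - 1) mod int M + 1 + (j - 1) div int M * int M = j"
    using div_mult_mod_eq[of "i - 1" "int M"] div_mult_mod_eq[of "j - 1" "int M"] by linarith+
  show ?thesis
    using grid_periodic_shift[OF assms, of "(i - 1) mod int M + 1" "(i - 1) div int M"
        "(j - 1) mod int M + 1" "(j - 1) div int M"]
    unfolding i j .
qed

lemma grid_periodic_diff:
  "grid_periodic M u \<Longrightarrow> grid_periodic M v \<Longrightarrow> grid_periodic M (\<lambda>i j. u i j - v i j)"
  unfolding grid_periodic_def by simp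

lemma shifted_mod_mem:
  assumes "1 \<le> M"
  shows "(i - 1) mod int M + 1 \<in> {1..int M}"
proof -
  have "0 < int M"
    using assms by simp
  then show ?thesis
    using pos_mod_bound[of "int M" "i - 1"] pos_mod_sign[of "int M" "i - 1"] by (simp add: add1_zle_eq)
qed

lemma grid_periodic_le_Max:
  assumes "grid_periodic M w" "1 \<le> M"
  shows "g (w i j) \<le> Max ((\<lambda>(i, j). g (w i j)) ` ({1..int M} \<times> {1..int M}))"
proof -
  let ?i = "(i - 1) mod int M + 1" and ?j = "(j - 1) mod int M + 1"
  have "(?i, ?j) \<in> {1..int M} \<times> {1..int M}"
    using shifted_mod_mem[OF assms(2)] by simp
  then have "(\<lambda>(i, j). g (w i j)) (?i, ?j) \<le> Max ((\<lambda>(i, j). g (w i j)) ` ({1..int M} \<times> {1..int M}))"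
    by (intro Max_ge) auto
  then show ?thesis
    using grid_periodic_reduce[OF assms(1), of i j, symmetric] by simp
qed

lemma abs_le_gnorm_inf:
  assumes "grid_periodic M w" "1 \<le> M"
  shows "\<bar>w i j\<bar> \<le> gnorm_inf M w"
  unfolding gnorm_inf_def by (rule grid_periodic_le_Max[OF assms])

lemma gnorm_inf_le_iff:
  assumes "grid_periodic M w" "1 \<le> M"
  shows "gnorm_inf M w \<le> b \<longleftrightarrow> (\<forall>i j. \<bar>w i j\<bar> \<le> b)"
proof
  assume "gnorm_inf M w \<le> b"
  then show "\<forall>i j. \<bar>w i j\<bar> \<le> b"
    using abs_le_gnorm_inf[OF assms] order_trans by blast
next
  assume "\<forall>i j. \<bar>w i j\<bar> \<le> b"
  then show "gnorm_inf M w \<le> b"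
    using assms(2) unfolding gnorm_inf_def by (auto simp: Max_le_iff)
qed

lemma gnorm_inf_nonneg:
  assumes "grid_periodic M w" "1 \<le> M"
  shows "0 \<le> gnorm_inf M w"
  using abs_le_gnorm_inf[OF assms, of 0 0] by linarith

section \<open>A discrete maximum principle\<close>

lemma grid_periodic_attains_max:
  assumes "grid_periodic M w" "1 \<le> M"
  obtains a b where "\<And>i j. w i j \<le> w a b"
proof -
  let ?W = "(\<lambda>(i, j). w i j) ` ({1..int M} \<times> {1..int M})"
  have "Max ?W \<in> ?W"
    using assms(2) by (intro Max_in) auto
  then obtain a b where max: "Max ?W = w a b"
    by auto
  show ?thesis
  proof (rule that)
    show "w i j \<le> w a b" for i j
      using grid_periodic_le_Max[OF assms, of "\<lambda>x. x" i j] max by simp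
  qed
qed

lemma lap_h_lincomb:
  "lap_h h (\<lambda>i j. a * u i j + b * v i j) i j = a * lap_h h u i j + b * lap_h h v i j"
  unfolding lap_h_def by (simp add: algebra_simps add_divide_distrib diff_divide_distrib)

lemma lap_h_diff:
  "lap_h h (\<lambda>i j. u i j - v i j) i j = lap_h h u i j - lap_h h v i j"
  unfolding lap_h_def by (simp add: algebra_simps add_divide_distrib diff_divide_distrib)

lemma lap_h_nonpos_at_max:
  assumes "\<And>i j. w i j \<le> w a b"
  shows "lap_h h w a b \<le> 0"
  using assms[of "a + 1" b] assms[of "a - 1" b] assms[of a "b + 1"] assms[of a "b - 1"]
  unfolding lap_h_def by (intro divide_nonpos_nonneg) auto

lemma discrete_max_principle_upper:
  assumes "grid_periodic M w" "1 \<le> M" "0 < c" "0 \<le> d"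
    and "\<And>i j. c * w i j - d * lap_h h w i j \<le> R"
  shows "c * w i j \<le> R"
proof -
  obtain a b where max: "\<And>i j. w i j \<le> w a b"
    using grid_periodic_attains_max[OF assms(1,2)] by metis
  have "d * lap_h h w a b \<le> 0"
    using lap_h_nonpos_at_max[of w a b h, OF max] assms(4) by (simp add: mult_nonneg_nonpos)
  then have "c * w a b \<le> R"
    using assms(5)[of a b] by linarith
  moreover have "c * w i j \<le> c * w a b"
    using max assms(3) by simp
  ultimately show ?thesis
    by linarith
qed

lemma discrete_max_principle:
  assumes "grid_periodic M w" "1 \<le> M" "0 < c" "0 \<le> d"
    and "\<And>i j. \<bar>c * w i j - d * lap_h h w i j\<bar> \<le> R"
  shows "c * \<bar>w i j\<bar> \<le> R"
proof -
  have "c * w i j \<le> R"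
    using discrete_max_principle_upper[OF assms(1-4)] assms(5) abs_le_D1 by blast
  moreover have "c * (- w i j) \<le> R"
  proof (rule discrete_max_principle_upper[where w = "\<lambda>i j. - w i j", OF _ assms(2-4)])
    show "grid_periodic M (\<lambda>i j. - w i j)"
      using assms(1) unfolding grid_periodic_def by simp
    show "c * - w i j - d * lap_h h (\<lambda>i j. - w i j) i j \<le> R" for i j
      using assms(5)[of i j] lap_h_lincomb[of h "-1" w 0 w i j] by simp
  qed
  ultimately show ?thesis
    by (simp add: abs_if)
qed

text \<open>For \<open>a \<ge> 4d/h\<^sup>2\<close>, \<open>a p + d \<Delta>\<^sub>h p\<close> is a nonnegative combination of the five stencil values.\<close>

lemma abs_weighted_lap_h_le:
  assumes "0 \<le> d" "4 * d / h^2 \<le> a" "\<And>i j. \<bar>p i j\<bar> \<le> \<beta>"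
  shows "\<bar>a * p i j + d * lap_h h p i j\<bar> \<le> a * \<beta>"
proof -
  let ?r = "d / h^2"
  let ?nb = "p (i + 1) j + p (i - 1) j + p i (j + 1) + p i (j - 1)"
  have "\<bar>?nb\<bar> \<le> 4 * \<beta>"
    using assms(3)[of "i + 1" j] assms(3)[of "i - 1" j] assms(3)[of i "j + 1"] assms(3)[of i "j - 1"]
    by linarith
  moreover have r: "0 \<le> ?r"
    using assms(1) by simp
  ultimately have nb: "\<bar>?r * ?nb\<bar> \<le> ?r * (4 * \<beta>)"
    unfolding abs_mult abs_of_nonneg[OF r] by (rule mult_left_mono)
  have "0 \<le> a - 4 * ?r"
    using assms(2) by simp
  then have centre: "\<bar>(a - 4 * ?r) * p i j\<bar> \<le> (a - 4 * ?r) * \<beta>"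
    unfolding abs_mult using assms(3) by (simp add: mult_left_mono)
  have "a * p i j + d * lap_h h p i j = (a - 4 * ?r) * p i j + ?r * ?nb"
    unfolding lap_h_def by (simp add: algebra_simps add_divide_distrib diff_divide_distrib)
  then have "\<bar>a * p i j + d * lap_h h p i j\<bar> \<le> (a - 4 * ?r) * \<beta> + ?r * (4 * \<beta>)"
    using order_trans[OF abs_triangle_ineq add_mono[OF centre nb]] by simp
  also have "\<dots> = a * \<beta>"
    by (simp add: algebra_simps)
  finally show ?thesis .
qed

lemma bounded_deriv_imp_lipschitz_on_interval:
  fixes f :: "real \<Rightarrow> real"
  assumes "0 \<le> k" "\<forall>x\<in>{a..b}. f differentiable at x" "\<forall>x\<in>{a..b}. \<bar>deriv f x\<bar> \<le> k"
  shows "k-lipschitz_on {a..b} f"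
proof (rule lipschitz_onI)
  fix x y
  assume "x \<in> {a..b}" "y \<in> {a..b}"
  then show "dist (f x) (f y) \<le> k * dist x y"
    using field_differentiable_bound[of "{a..b}" f "deriv f" k x y] assms(2,3)
    by (auto simp: dist_real_def DERIV_deriv_iff_real_differentiable has_field_derivative_at_within)
qed (rule assms(1))

lemma f_dw_differentiable: "f_dw differentiable at x"
  unfolding f_dw_def by (intro derivative_intros)

lemma f_fh_differentiable:
  assumes "\<bar>x\<bar> < 1"
  shows "f_fh \<theta> \<theta>c differentiable at x"
  unfolding f_fh_def real_differentiable_def using assms
  by (intro exI) (auto intro!: derivative_eq_intros simp: abs_less_iff)

lemma f_fh_odd:
  assumes "\<bar>x\<bar> < 1"
  shows "f_fh \<theta> \<theta>c (- x) = - f_fh \<theta> \<theta>c x"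
  using assms by (simp add: f_fh_def ln_div abs_less_iff algebra_simps)

lemma double_well_or_Flory_Huggins_properties:
  assumes "(f = f_dw \<and> \<beta> = 1) \<or>
    (\<exists>\<theta> \<theta>c. 0 < \<theta> \<and> \<theta> < \<theta>c \<and> f = f_fh \<theta> \<theta>c \<and> 0 < \<beta> \<and> \<beta> < 1 \<and> f \<beta> = 0)"
  shows "f \<beta> = 0" and "f (- \<beta>) = 0" and "\<forall>x\<in>{-\<beta>..\<beta>}. f differentiable at x"
  using assms
proof (atomize (full), elim disjE exE conjE)
  assume "f = f_dw" "\<beta> = 1"
  then show "f \<beta> = 0 \<and> f (- \<beta>) = 0 \<and> (\<forall>x\<in>{-\<beta>..\<beta>}. f differentiable at x)"
    by (simp add: f_dw_def f_dw_differentiable)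
next
  fix \<theta> \<theta>c
  assume "f = f_fh \<theta> \<theta>c" "0 < \<beta>" "\<beta> < 1" "f \<beta> = 0"
  then show "f \<beta> = 0 \<and> f (- \<beta>) = 0 \<and> (\<forall>x\<in>{-\<beta>..\<beta>}. f differentiable at x)"
    by (auto simp: f_fh_odd f_fh_differentiable)
qed

lemma B0_pos:
  assumes "0 < \<alpha>" "\<alpha> < 1" "0 < \<tau>"
  shows "0 < B0 \<alpha> \<tau>"
  using assms unfolding B0_def by simp

lemma B0_gt_of_time_step:
  assumes "0 < \<alpha>" "\<alpha> < 1" "0 < \<tau>" "0 \<le> K"
    and "\<tau> \<le> (4 / (11 * K * Gamma (2 - \<alpha>))) powr (1 / \<alpha>)"
  shows "K < B0 \<alpha> \<tau>"
proof (cases "K = 0")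
  case True
  then show ?thesis
    using B0_pos assms(1-3) by simp
next
  case False
  let ?G = "Gamma (2 - \<alpha>)" and ?X = "4 / (11 * K * Gamma (2 - \<alpha>))"
  have K: "0 < K"
    using assms(4) False by simp
  have G: "0 < ?G" and X: "0 < ?X"
    using assms(1,2) K by auto
  have "\<tau> powr \<alpha> \<le> (?X powr (1 / \<alpha>)) powr \<alpha>"
    using assms(1,3,5) by (intro powr_mono2) auto
  also have "\<dots> = ?X"
    using assms(1) X by (simp add: powr_powr)
  finally have tau_X: "\<tau> powr \<alpha> \<le> ?X" .
  txt \<open>The constant \<open>4/11\<close> leaves room: \<open>(1 - \<alpha>/2) powr (1 - \<alpha>) \<ge> 1/2\<close> even gives \<open>B0 \<ge> 11K/8\<close>.\<close>
  have "(1 - \<alpha>/2) powr 1 \<le> (1 - \<alpha>/2) powr (1 - \<alpha>)"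
    using assms(1,2) by (intro powr_mono') auto
  then have half: "1/2 \<le> (1 - \<alpha>/2) powr (1 - \<alpha>)"
    using assms(2) by simp
  have "11/8 * K = (1/2) / (?G * ?X)"
    using G K by (simp add: field_simps)
  also have "\<dots> \<le> (1/2) / (?G * \<tau> powr \<alpha>)"
    using G X tau_X assms(3) by (intro divide_left_mono mult_left_mono mult_pos_pos) auto
  also have "\<dots> \<le> B0 \<alpha> \<tau>"
    unfolding B0_def using half G assms(3) by (intro divide_right_mono) auto
  finally show ?thesis
    using K by linarith
qed

section \<open>The stabilized first-step iteration\<close>

lemma abs_shift_comb_le:
  assumes "0 \<le> \<alpha>" "\<alpha> \<le> 2" "\<bar>u i j\<bar> \<le> \<beta>" "\<bar>p i j\<bar> \<le> \<beta>"
  shows "\<bar>shift_comb \<alpha> u p i j\<bar> \<le> \<beta>"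
proof -
  have "(1 - \<alpha>/2) * u i j + \<alpha>/2 * p i j \<le> \<beta>"
    using assms by (intro convex_bound_le) auto
  moreover have "(1 - \<alpha>/2) * (- u i j) + \<alpha>/2 * (- p i j) \<le> \<beta>"
    using assms by (intro convex_bound_le) auto
  ultimately show ?thesis
    unfolding shift_comb_def by (simp add: abs_le_iff)
qed

lemma first_step_eq_iff_iter_fixed_point:
  "first_step_eq f m \<epsilon> \<alpha> h \<tau> p u \<longleftrightarrow> first_step_iter f m \<epsilon> \<alpha> \<kappa> h \<tau> p u u"
  unfolding first_step_eq_def first_step_iter_def by simp

locale first_step_scheme =
  fixes f :: "real \<Rightarrow> real" and m \<epsilon> \<alpha> \<kappa> h \<tau> \<beta> :: real and M :: nat and phi0 :: grid
  assumes M: "1 \<le> M" and m: "0 < m" and alpha: "0 < \<alpha>" "\<alpha> < 1" and tau: "0 < \<tau>"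
    and kappa: "0 \<le> \<kappa>"
    and f_lipschitz: "\<kappa>-lipschitz_on {-\<beta>..\<beta>} f" and f_zeros: "f \<beta> = 0" "f (- \<beta>) = 0"
    and phi0_bounded: "\<And>i j. \<bar>phi0 i j\<bar> \<le> \<beta>"
begin

abbreviation iter_step :: "grid \<Rightarrow> grid \<Rightarrow> bool" where
  "iter_step \<equiv> first_step_iter f m \<epsilon> \<alpha> \<kappa> h \<tau> phi0"

definition lhs_coeff :: real where
  "lhs_coeff = B0 \<alpha> \<tau> + m * \<kappa> * (1 - \<alpha>/2)"

lemma lhs_coeff_pos: "0 < lhs_coeff"
  unfolding lhs_coeff_def using B0_pos[OF alpha tau] m kappa alpha by (simp add: add_pos_nonneg)

lemma f_lipschitzD: "x \<in> {-\<beta>..\<beta>} \<Longrightarrow> y \<in> {-\<beta>..\<beta>} \<Longrightarrow> \<bar>f x - f y\<bar> \<le> \<kappa> * \<bar>x - y\<bar>"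
  using lipschitz_onD[OF f_lipschitz] by (simp add: dist_real_def)

lemma stabilized_f_bounded:
  assumes "x \<in> {-\<beta>..\<beta>}"
  shows "\<bar>f x + \<kappa> * x\<bar> \<le> \<kappa> * \<beta>"
proof -
  have "\<beta> \<in> {-\<beta>..\<beta>}" "- \<beta> \<in> {-\<beta>..\<beta>}"
    using assms by auto
  then have "\<bar>f x - f \<beta>\<bar> \<le> \<kappa> * \<bar>x - \<beta>\<bar>" "\<bar>f x - f (- \<beta>)\<bar> \<le> \<kappa> * \<bar>x - - \<beta>\<bar>"
    using f_lipschitzD[OF assms] by blast+
  moreover have "\<bar>x - \<beta>\<bar> = \<beta> - x" "\<bar>x - - \<beta>\<bar> = x + \<beta>"
    using assms by auto
  ultimately have "\<bar>f x\<bar> \<le> \<kappa> * (\<beta> - x)" "\<bar>f x\<bar> \<le> \<kappa> * (x + \<beta>)"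
    using f_zeros by simp_all
  then show ?thesis
    by (simp add: abs_le_iff algebra_simps)
qed

lemma stabilized_f_lipschitz:
  assumes "x \<in> {-\<beta>..\<beta>}" "y \<in> {-\<beta>..\<beta>}"
  shows "\<bar>(f x + \<kappa> * x) - (f y + \<kappa> * y)\<bar> \<le> 2 * \<kappa> * \<bar>x - y\<bar>"
proof -
  have "\<bar>(f x + \<kappa> * x) - (f y + \<kappa> * y)\<bar> \<le> \<bar>f x - f y\<bar> + \<bar>\<kappa> * (x - y)\<bar>"
    using abs_triangle_ineq[of "f x - f y" "\<kappa> * (x - y)"] by (simp add: algebra_simps)
  also have "\<dots> \<le> \<kappa> * \<bar>x - y\<bar> + \<kappa> * \<bar>x - y\<bar>"
    using f_lipschitzD[OF assms] kappa by (simp add: abs_mult)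
  finally show ?thesis
    by simp
qed

lemma shift_comb_mem:
  assumes "\<And>i j. \<bar>v i j\<bar> \<le> \<beta>"
  shows "shift_comb \<alpha> v phi0 i j \<in> {-\<beta>..\<beta>}"
  using abs_shift_comb_le[of \<alpha> v i j \<beta> phi0] assms phi0_bounded alpha by (simp add: abs_le_iff)

lemma iter_step_linear_form:
  assumes "iter_step v u"
  shows "lhs_coeff * u i j - m * \<epsilon>^2 * (1 - \<alpha>/2) * lap_h h u i j
    = (B0 \<alpha> \<tau> - m * \<kappa> * (\<alpha>/2)) * phi0 i j + m * \<epsilon>^2 * (\<alpha>/2) * lap_h h phi0 i j
      + m * (f (shift_comb \<alpha> v phi0 i j) + \<kappa> * shift_comb \<alpha> v phi0 i j)"
proof -
  have lap: "lap_h h (shift_comb \<alpha> u phi0) i j = (1 - \<alpha>/2) * lap_h h u i j + \<alpha>/2 * lap_h h phi0 i j"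
    unfolding shift_comb_def by (rule lap_h_lincomb)
  have sc: "shift_comb \<alpha> u phi0 i j = (1 - \<alpha>/2) * u i j + \<alpha>/2 * phi0 i j"
    unfolding shift_comb_def ..
  have "B0 \<alpha> \<tau> * (u i j - phi0 i j) = m * (\<epsilon>^2 * lap_h h (shift_comb \<alpha> u phi0) i j
      + f (shift_comb \<alpha> v phi0 i j) - \<kappa> * (shift_comb \<alpha> u phi0 i j - shift_comb \<alpha> v phi0 i j))"
    using assms unfolding first_step_iter_def by blast
  then show ?thesis
    unfolding lhs_coeff_def lap sc by (simp add: algebra_simps)
qed

lemma iter_step_bounded:
  assumes stable: "\<alpha>/2 * m * (\<kappa> + 4 * \<epsilon>^2 / h^2) \<le> B0 \<alpha> \<tau>"
    and step: "iter_step v u" and per: "grid_periodic M u" and v: "\<And>i j. \<bar>v i j\<bar> \<le> \<beta>"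
  shows "\<bar>u i j\<bar> \<le> \<beta>"
proof -
  have "\<bar>lhs_coeff * u i j - m * \<epsilon>^2 * (1 - \<alpha>/2) * lap_h h u i j\<bar> \<le> lhs_coeff * \<beta>" for i j
  proof -
    have "4 * (m * \<epsilon>^2 * (\<alpha>/2)) / h^2 \<le> B0 \<alpha> \<tau> - m * \<kappa> * (\<alpha>/2)"
      using stable by (simp add: algebra_simps)
    then have "\<bar>(B0 \<alpha> \<tau> - m * \<kappa> * (\<alpha>/2)) * phi0 i j + m * \<epsilon>^2 * (\<alpha>/2) * lap_h h phi0 i j\<bar>
        \<le> (B0 \<alpha> \<tau> - m * \<kappa> * (\<alpha>/2)) * \<beta>"
      using m alpha by (intro abs_weighted_lap_h_le phi0_bounded) auto
    moreover have "\<bar>m * (f (shift_comb \<alpha> v phi0 i j) + \<kappa> * shift_comb \<alpha> v phi0 i j)\<bar> \<le> m * (\<kappa> * \<beta>)"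
      using stabilized_f_bounded[OF shift_comb_mem[OF v]] m by (simp add: abs_mult)
    ultimately have "\<bar>lhs_coeff * u i j - m * \<epsilon>^2 * (1 - \<alpha>/2) * lap_h h u i j\<bar>
        \<le> (B0 \<alpha> \<tau> - m * \<kappa> * (\<alpha>/2)) * \<beta> + m * (\<kappa> * \<beta>)"
      unfolding iter_step_linear_form[OF step] by (rule order_trans[OF abs_triangle_ineq add_mono])
    also have "\<dots> = lhs_coeff * \<beta>"
      unfolding lhs_coeff_def by (simp add: algebra_simps)
    finally show ?thesis .
  qed
  then have "lhs_coeff * \<bar>u i j\<bar> \<le> lhs_coeff * \<beta>"
    using m alpha by (intro discrete_max_principle[OF per M lhs_coeff_pos, where d = "m * \<epsilon>^2 * (1 - \<alpha>/2)" and h = h]) auto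
  then show ?thesis
    using lhs_coeff_pos by simp
qed

definition contraction_factor :: real where
  "contraction_factor = 2 * m * \<kappa> * (1 - \<alpha>/2) / lhs_coeff"

lemma contraction_factor_bounds:
  assumes "m * \<kappa> * (1 - \<alpha>/2) < B0 \<alpha> \<tau>"
  shows "0 \<le> contraction_factor" "contraction_factor < 1"
proof -
  show "0 \<le> contraction_factor"
    unfolding contraction_factor_def using lhs_coeff_pos m kappa alpha
    by (intro divide_nonneg_pos mult_nonneg_nonneg) auto
  show "contraction_factor < 1"
    unfolding contraction_factor_def using lhs_coeff_pos assms by (simp add: lhs_coeff_def field_simps)
qed

lemma iter_step_contraction:
  assumes "iter_step v u" "iter_step v' u'" "grid_periodic M u" "grid_periodic M u'"
    and "\<And>i j. \<bar>v i j\<bar> \<le> \<beta>" "\<And>i j. \<bar>v' i j\<bar> \<le> \<beta>" "\<And>i j. \<bar>v i j - v' i j\<bar> \<le> D"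
  shows "\<bar>u i j - u' i j\<bar> \<le> contraction_factor * D"
proof -
  have "\<bar>lhs_coeff * (u i j - u' i j) - m * \<epsilon>^2 * (1 - \<alpha>/2) * lap_h h (\<lambda>i j. u i j - u' i j) i j\<bar>
      \<le> 2 * m * \<kappa> * (1 - \<alpha>/2) * D" for i j
  proof -
    let ?x = "shift_comb \<alpha> v phi0 i j" and ?y = "shift_comb \<alpha> v' phi0 i j"
    have "lhs_coeff * (u i j - u' i j) - m * \<epsilon>^2 * (1 - \<alpha>/2) * lap_h h (\<lambda>i j. u i j - u' i j) i j
        = (lhs_coeff * u i j - m * \<epsilon>^2 * (1 - \<alpha>/2) * lap_h h u i j)
          - (lhs_coeff * u' i j - m * \<epsilon>^2 * (1 - \<alpha>/2) * lap_h h u' i j)"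
      unfolding lap_h_diff by (simp add: right_diff_distrib)
    also have "\<dots> = m * ((f ?x + \<kappa> * ?x) - (f ?y + \<kappa> * ?y))"
      unfolding iter_step_linear_form[OF assms(1)] iter_step_linear_form[OF assms(2)]
      by (simp add: algebra_simps)
    finally have "lhs_coeff * (u i j - u' i j) - m * \<epsilon>^2 * (1 - \<alpha>/2) * lap_h h (\<lambda>i j. u i j - u' i j) i j
        = m * ((f ?x + \<kappa> * ?x) - (f ?y + \<kappa> * ?y))" .
    then have "\<bar>lhs_coeff * (u i j - u' i j) - m * \<epsilon>^2 * (1 - \<alpha>/2) * lap_h h (\<lambda>i j. u i j - u' i j) i j\<bar>
        = m * \<bar>(f ?x + \<kappa> * ?x) - (f ?y + \<kappa> * ?y)\<bar>"
      using m by (simp add: abs_mult)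
    also have "\<dots> \<le> m * (2 * \<kappa> * \<bar>?x - ?y\<bar>)"
      using m by (intro mult_left_mono stabilized_f_lipschitz shift_comb_mem assms(5,6)) auto
    also have "?x - ?y = (1 - \<alpha>/2) * (v i j - v' i j)"
      unfolding shift_comb_def by (simp add: algebra_simps)
    also have "m * (2 * \<kappa> * \<bar>(1 - \<alpha>/2) * (v i j - v' i j)\<bar>) = 2 * m * \<kappa> * (1 - \<alpha>/2) * \<bar>v i j - v' i j\<bar>"
      using alpha by (simp add: abs_mult)
    also have "\<dots> \<le> 2 * m * \<kappa> * (1 - \<alpha>/2) * D"
      using assms(7) m kappa alpha by (intro mult_left_mono) auto
    finally show ?thesis .
  qed
  then have "lhs_coeff * \<bar>u i j - u' i j\<bar> \<le> 2 * m * \<kappa> * (1 - \<alpha>/2) * D"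
    using m alpha grid_periodic_diff[OF assms(3,4)]
    by (intro discrete_max_principle[where w = "\<lambda>i j. u i j - u' i j" and d = "m * \<epsilon>^2 * (1 - \<alpha>/2)" and h = h, OF _ M lhs_coeff_pos]) auto
  also have "\<dots> = lhs_coeff * (contraction_factor * D)"
    unfolding contraction_factor_def using lhs_coeff_pos by simp
  finally show ?thesis
    using lhs_coeff_pos by simp
qed

lemma iter_step_tendsto:
  assumes step: "\<And>n. iter_step (v n) (u n)"
    and v: "\<And>i j. (\<lambda>n. v n i j) \<longlonglongrightarrow> v' i j" and u: "\<And>i j. (\<lambda>n. u n i j) \<longlonglongrightarrow> u' i j"
    and bounded: "\<And>n i j. \<bar>v n i j\<bar> \<le> \<beta>"
  shows "iter_step v' u'"
  unfolding first_step_iter_def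
proof (intro allI)
  fix i j
  let ?rhs = "\<lambda>u v. m * (\<epsilon>^2 * lap_h h (shift_comb \<alpha> u phi0) i j + f (shift_comb \<alpha> v phi0 i j)
    - \<kappa> * (shift_comb \<alpha> u phi0 i j - shift_comb \<alpha> v phi0 i j))"
  have sc: "(\<lambda>n. shift_comb \<alpha> (w n) phi0 a b) \<longlonglongrightarrow> shift_comb \<alpha> w' phi0 a b"
    if "\<And>i j. (\<lambda>n. w n i j) \<longlonglongrightarrow> w' i j" for w w' a b
    unfolding shift_comb_def by (intro tendsto_intros that)
  have in_interval: "\<forall>\<^sub>F n in sequentially. shift_comb \<alpha> (v n) phi0 i j \<in> {-\<beta>..\<beta>}"
    using shift_comb_mem bounded by simp
  then have "shift_comb \<alpha> v' phi0 i j \<in> {-\<beta>..\<beta>}"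
    by (intro Lim_in_closed_set[OF closed_atLeastAtMost _ _ sc[OF v]]) auto
  then have "(\<lambda>n. f (shift_comb \<alpha> (v n) phi0 i j)) \<longlonglongrightarrow> f (shift_comb \<alpha> v' phi0 i j)"
    by (rule continuous_on_tendsto_compose[OF lipschitz_on_continuous_on[OF f_lipschitz] sc[OF v] _ in_interval])
  moreover have "(\<lambda>n. lap_h h (shift_comb \<alpha> (u n) phi0) i j) \<longlonglongrightarrow> lap_h h (shift_comb \<alpha> u' phi0) i j"
    unfolding lap_h_def divide_inverse by (intro tendsto_intros sc u)
  ultimately have "(\<lambda>n. ?rhs (u n) (v n)) \<longlonglongrightarrow> ?rhs u' v'"
    by (intro tendsto_intros sc u v)
  then have "(\<lambda>n. B0 \<alpha> \<tau> * (u n i j - phi0 i j)) \<longlonglongrightarrow> ?rhs u' v'"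
    using step unfolding first_step_iter_def by simp
  moreover have "(\<lambda>n. B0 \<alpha> \<tau> * (u n i j - phi0 i j)) \<longlonglongrightarrow> B0 \<alpha> \<tau> * (u' i j - phi0 i j)"
    by (intro tendsto_intros u)
  ultimately show "B0 \<alpha> \<tau> * (u' i j - phi0 i j) = ?rhs u' v'"
    using LIMSEQ_unique by blast
qed

lemma iter_step_fixed_point_unique:
  assumes contractive: "m * \<kappa> * (1 - \<alpha>/2) < B0 \<alpha> \<tau>"
    and "iter_step u u" "iter_step u' u'" "grid_periodic M u" "grid_periodic M u'"
    and "\<And>i j. \<bar>u i j\<bar> \<le> \<beta>" "\<And>i j. \<bar>u' i j\<bar> \<le> \<beta>"
  shows "u = u'"
proof -
  let ?w = "\<lambda>i j. u i j - u' i j"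
  let ?D = "gnorm_inf M ?w"
  have per: "grid_periodic M ?w"
    using grid_periodic_diff assms(4,5) .
  have "\<bar>?w i j\<bar> \<le> contraction_factor * ?D" for i j
    by (rule iter_step_contraction[OF assms(2-7) abs_le_gnorm_inf[OF per M]])
  then have "?D \<le> contraction_factor * ?D"
    using gnorm_inf_le_iff[OF per M] by blast
  then have "(1 - contraction_factor) * ?D \<le> 0"
    by (simp add: left_diff_distrib)
  then have "?D \<le> 0"
    using contraction_factor_bounds[OF contractive] gnorm_inf_nonneg[OF per M] by (simp add: mult_le_0_iff)
  show ?thesis
  proof (intro ext)
    fix i j
    have "\<bar>u i j - u' i j\<bar> \<le> 0"
      using abs_le_gnorm_inf[OF per M, of i j] \<open>?D \<le> 0\<close> by linarith
    then show "u i j = u' i j"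
      by simp
  qed
qed

end

locale first_step_iteration = first_step_scheme +
  fixes phi :: "nat \<Rightarrow> grid"
  assumes phi_0: "phi 0 = phi0" and phi_periodic: "\<And>n. grid_periodic M (phi n)"
    and phi_step: "\<And>n. iter_step (phi n) (phi (Suc n))"
    and tau_stable: "\<tau> \<le> (4 / (11 * (\<alpha>/2) * m * (\<kappa> + 4 * \<epsilon>^2 / h^2) * Gamma (2 - \<alpha>))) powr (1 / \<alpha>)"
begin

lemma B0_stable: "\<alpha>/2 * m * (\<kappa> + 4 * \<epsilon>^2 / h^2) \<le> B0 \<alpha> \<tau>"
proof -
  have K: "0 \<le> \<alpha>/2 * m * (\<kappa> + 4 * \<epsilon>^2 / h^2)"
    using alpha m kappa by (intro mult_nonneg_nonneg add_nonneg_nonneg divide_nonneg_nonneg) auto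
  have "\<tau> \<le> (4 / (11 * (\<alpha>/2 * m * (\<kappa> + 4 * \<epsilon>^2 / h^2)) * Gamma (2 - \<alpha>))) powr (1 / \<alpha>)"
    using tau_stable by (simp only: mult.assoc)
  from B0_gt_of_time_step[OF alpha tau K this] show ?thesis
    by (rule less_imp_le)
qed

lemma iterates_bounded: "\<bar>phi n i j\<bar> \<le> \<beta>"
proof (induction n arbitrary: i j)
  case 0
  then show ?case
    using phi_0 phi0_bounded by simp
next
  case (Suc n)
  then show ?case
    using iter_step_bounded[OF B0_stable phi_step phi_periodic] by blast
qed

lemma gnorm_inf_iterates_le: "gnorm_inf M (phi n) \<le> \<beta>"
  using gnorm_inf_le_iff[OF phi_periodic M] iterates_bounded by blast

end

lemma convergent_if_geometric_increments:
  fixes x :: "nat \<Rightarrow> 'a::banach"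
  assumes "\<And>n. norm (x (Suc n) - x n) \<le> C * q ^ n" "0 \<le> q" "q < 1"
  shows "convergent x"
proof -
  have "summable (\<lambda>n. C * q ^ n)"
    using assms(2,3) by (intro summable_mult summable_geometric) simp
  then have "summable (\<lambda>n. x (Suc n) - x n)"
    using assms(1) by (rule summable_comparison_test'[where N = 0])
  then have "convergent (\<lambda>n. x n - x 0)"
    by (simp add: summable_iff_convergent sum_lessThan_telescope)
  then show ?thesis
    by (simp add: convergent_diff_const_right_iff)
qed

locale contractive_first_step_iteration = first_step_iteration +
  assumes tau_contractive: "\<tau> \<le> (4 / (11 * \<kappa> * (1 - \<alpha>/2) * m * Gamma (2 - \<alpha>))) powr (1 / \<alpha>)"
begin

lemma B0_contractive: "m * \<kappa> * (1 - \<alpha>/2) < B0 \<alpha> \<tau>"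
proof -
  have "\<tau> \<le> (4 / (11 * (\<kappa> * (1 - \<alpha>/2) * m) * Gamma (2 - \<alpha>))) powr (1 / \<alpha>)"
    using tau_contractive by (simp only: mult.assoc)
  then have "\<kappa> * (1 - \<alpha>/2) * m < B0 \<alpha> \<tau>"
    using alpha m kappa by (intro B0_gt_of_time_step[OF alpha tau]) auto
  then show ?thesis
    by (simp add: ac_simps)
qed

lemma iterates_increment_bound:
  "\<bar>phi (Suc n) i j - phi n i j\<bar> \<le> contraction_factor ^ n * (2 * \<beta>)"
proof (induction n arbitrary: i j)
  case 0
  then show ?case
    using iterates_bounded[of 1 i j] iterates_bounded[of 0 i j] by simp
next
  case (Suc n)
  have "\<bar>phi (Suc (Suc n)) i j - phi (Suc n) i j\<bar> \<le> contraction_factor * (contraction_factor ^ n * (2 * \<beta>))"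
    by (rule iter_step_contraction[OF phi_step phi_step phi_periodic phi_periodic
          iterates_bounded iterates_bounded Suc.IH])
  then show ?case
    by simp
qed

definition first_step_limit :: grid where
  "first_step_limit i j = lim (\<lambda>n. phi n i j)"

lemma iterates_tendsto: "(\<lambda>n. phi n i j) \<longlonglongrightarrow> first_step_limit i j"
proof -
  have "convergent (\<lambda>n. phi n i j)"
    using iterates_increment_bound contraction_factor_bounds[OF B0_contractive]
    by (intro convergent_if_geometric_increments[where C = "2 * \<beta>"]) (auto simp: mult.commute)
  then show ?thesis
    unfolding first_step_limit_def by (simp add: convergent_LIMSEQ_iff)
qed

lemma first_step_limit_periodic: "grid_periodic M first_step_limit"
  using phi_periodic unfolding grid_periodic_def first_step_limit_def by simp

lemma first_step_limit_bounded: "\<bar>first_step_limit i j\<bar> \<le> \<beta>"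
  by (rule LIMSEQ_le_const2[OF tendsto_rabs[OF iterates_tendsto]]) (use iterates_bounded in blast)

lemma first_step_limit_fixed_point: "iter_step first_step_limit first_step_limit"
  by (rule iter_step_tendsto[OF phi_step iterates_tendsto LIMSEQ_Suc[OF iterates_tendsto] iterates_bounded])

lemma iterates_error_bound:
  "\<bar>phi n i j - first_step_limit i j\<bar> \<le> contraction_factor ^ n * (2 * \<beta>)"
proof (induction n arbitrary: i j)
  case 0
  then show ?case
    using iterates_bounded[of 0 i j] first_step_limit_bounded[of i j] by simp
next
  case (Suc n)
  have "\<bar>phi (Suc n) i j - first_step_limit i j\<bar> \<le> contraction_factor * (contraction_factor ^ n * (2 * \<beta>))"
    by (rule iter_step_contraction[OF phi_step first_step_limit_fixed_point phi_periodic
          first_step_limit_periodic iterates_bounded first_step_limit_bounded Suc.IH])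
  then show ?case
    by simp
qed

lemma iterates_tendsto_gnorm_inf:
  "(\<lambda>n. gnorm_inf M (\<lambda>i j. phi n i j - first_step_limit i j)) \<longlonglongrightarrow> 0"
proof (rule Lim_null_comparison)
  have per: "grid_periodic M (\<lambda>i j. phi n i j - first_step_limit i j)" for n
    by (intro grid_periodic_diff phi_periodic first_step_limit_periodic)
  show "\<forall>\<^sub>F n in sequentially. norm (gnorm_inf M (\<lambda>i j. phi n i j - first_step_limit i j))
      \<le> contraction_factor ^ n * (2 * \<beta>)"
    using gnorm_inf_nonneg[OF per M] gnorm_inf_le_iff[OF per M] iterates_error_bound
    by (intro always_eventually allI) simp
  show "(\<lambda>n. contraction_factor ^ n * (2 * \<beta>)) \<longlonglongrightarrow> 0"
    using contraction_factor_bounds[OF B0_contractive]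
    by (intro tendsto_mult_left_zero LIMSEQ_power_zero) auto
qed

lemma first_step_solution:
  "\<exists>phi1. grid_periodic M phi1
     \<and> first_step_eq f m \<epsilon> \<alpha> h \<tau> phi0 phi1
     \<and> gnorm_inf M phi1 \<le> \<beta>
     \<and> ((\<lambda>s. gnorm_inf M (\<lambda>i j. phi s i j - phi1 i j)) \<longlonglongrightarrow> 0)
     \<and> (\<forall>psi. grid_periodic M psi \<and> first_step_eq f m \<epsilon> \<alpha> h \<tau> phi0 psi
              \<and> gnorm_inf M psi \<le> \<beta> \<longrightarrow> psi = phi1)"
proof (intro exI[of _ first_step_limit] conjI allI impI)
  show "first_step_eq f m \<epsilon> \<alpha> h \<tau> phi0 first_step_limit"
    using first_step_limit_fixed_point first_step_eq_iff_iter_fixed_point by blast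
  show "gnorm_inf M first_step_limit \<le> \<beta>"
    using gnorm_inf_le_iff[OF first_step_limit_periodic M] first_step_limit_bounded by blast
  fix psi
  assume "grid_periodic M psi \<and> first_step_eq f m \<epsilon> \<alpha> h \<tau> phi0 psi \<and> gnorm_inf M psi \<le> \<beta>"
  then have "iter_step psi psi" "grid_periodic M psi" "\<And>i j. \<bar>psi i j\<bar> \<le> \<beta>"
    using gnorm_inf_le_iff[OF _ M] first_step_eq_iff_iter_fixed_point by blast+
  then show "psi = first_step_limit"
    using iter_step_fixed_point_unique[OF B0_contractive _ first_step_limit_fixed_point _
        first_step_limit_periodic _ first_step_limit_bounded] by blast
qed (rule first_step_limit_periodic, rule iterates_tendsto_gnorm_inf)

end

theorem mainTheorem8:
  fixes L m \<epsilon> \<alpha> \<kappa> \<beta> \<tau>1 :: real and M :: nat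
    and f :: "real \<Rightarrow> real" and phi0 :: grid and phi :: "nat \<Rightarrow> grid"
  assumes L: "L > 0" and M: "M \<ge> 1" and m: "m > 0" and eps: "\<epsilon> > 0"
    and alpha: "0 < \<alpha>" "\<alpha> < 1" and tau: "\<tau>1 > 0" and kap0: "\<kappa> \<ge> 0"
    and nonlin: "(f = f_dw \<and> \<beta> = 1) \<or>
       (\<exists>\<theta> \<theta>c. 0 < \<theta> \<and> \<theta> < \<theta>c \<and> f = f_fh \<theta> \<theta>c \<and> 0 < \<beta> \<and> \<beta> < 1 \<and> f \<beta> = 0)"
    and kap: "\<forall>x\<in>{-\<beta>..\<beta>}. \<bar>deriv f x\<bar> \<le> \<kappa>"
    and phi0_per: "grid_periodic M phi0"
    and phi0_bd: "gnorm_inf M phi0 \<le> \<beta>"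
    and iter0: "phi 0 = phi0"
    and iter_per: "\<forall>s. grid_periodic M (phi s)"
    and iter: "\<forall>s\<ge>1. first_step_iter f m \<epsilon> \<alpha> \<kappa> (L / real M) \<tau>1 phi0 (phi (s - 1)) (phi s)"
  shows
    "(\<tau>1 \<le> (4 / (11 * (\<alpha>/2) * m * (\<kappa> + 4 * \<epsilon>^2 / (L / real M)^2) * Gamma (2 - \<alpha>))) powr (1 / \<alpha>)
       \<longrightarrow> (\<forall>s\<ge>1. gnorm_inf M (phi s) \<le> \<beta>))
     \<and> ((\<tau>1 \<le> (4 / (11 * (\<alpha>/2) * m * (\<kappa> + 4 * \<epsilon>^2 / (L / real M)^2) * Gamma (2 - \<alpha>))) powr (1 / \<alpha>)
        \<and> \<tau>1 \<le> (4 / (11 * \<kappa> * (1 - \<alpha>/2) * m * Gamma (2 - \<alpha>))) powr (1 / \<alpha>))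
       \<longrightarrow> (\<exists>phi1. grid_periodic M phi1
              \<and> first_step_eq f m \<epsilon> \<alpha> (L / real M) \<tau>1 phi0 phi1
              \<and> gnorm_inf M phi1 \<le> \<beta>
              \<and> ((\<lambda>s. gnorm_inf M (\<lambda>i j. phi s i j - phi1 i j)) \<longlonglongrightarrow> 0)
              \<and> (\<forall>psi. grid_periodic M psi \<and> first_step_eq f m \<epsilon> \<alpha> (L / real M) \<tau>1 phi0 psi
                       \<and> gnorm_inf M psi \<le> \<beta> \<longrightarrow> psi = phi1)))"
proof -
  have f: "f \<beta> = 0" "f (- \<beta>) = 0" "\<forall>x\<in>{-\<beta>..\<beta>}. f differentiable at x"
    using double_well_or_Flory_Huggins_properties[OF nonlin] by blast+
  have scheme: "first_step_scheme f m \<alpha> \<kappa> \<tau>1 \<beta> M phi0"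
  proof
    show "\<kappa>-lipschitz_on {-\<beta>..\<beta>} f"
      using kap0 f(3) kap by (rule bounded_deriv_imp_lipschitz_on_interval)
    show "\<bar>phi0 i j\<bar> \<le> \<beta>" for i j
      using gnorm_inf_le_iff[OF phi0_per M] phi0_bd by blast
  qed (use M m alpha tau kap0 f in auto)
  have phi_step: "first_step_iter f m \<epsilon> \<alpha> \<kappa> (L / real M) \<tau>1 phi0 (phi n) (phi (Suc n))" for n
    using iter[rule_format, of "Suc n"] by simp
  note iteration = first_step_iteration.intro[OF scheme
      first_step_iteration_axioms.intro[OF iter0 iter_per[rule_format] phi_step]]
  note contractive = contractive_first_step_iteration.intro[OF iteration
      contractive_first_step_iteration_axioms.intro]
  show ?thesis
    using first_step_iteration.gnorm_inf_iterates_le[OF iteration]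
      contractive_first_step_iteration.first_step_solution[OF contractive] by blast
qed

end
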